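(* Let $\mathcal{F}:(\mathcal{K},c)\to(\mathcal{K}',c')$ be a bilax functor with compatible Yang–Baxter operator. For every object $A$ of $\mathcal{K}$, the functor $\mathcal{F}_{A,A}:\mathcal{K}(A,A)\to\mathcal{K}'(\mathcal{F}(A),\mathcal{F}(A))$ factors through the category of Hopf bimodules over the $c'$-bimonad $B:=\mathcal{F}(\mathrm{id}_A)$ in $(\mathcal{K}'(\mathcal{F}(A),\mathcal{F}(A)),c')$: for every 1-endocell $x$ of $A$, $\mathcal{F}(x)$ with the structures below is a Hopf bimodule over $B$, and for every 2-cell $\alpha:x\Rightarrow y$ in $\mathcal{K}(A,A)$, $\mathcal{F}(\alpha)$ is a morphism of Hopf bimodules.
   Context: Conventions: $\circ$ horizontal composition, $\cdot$ vertical composition ($\beta\cdot\alpha$: first $\alpha$), $1$ identity 2-cells. A Yang–Baxter operator $c$ of a 2-category: natural 2-cells $c_{g,f}:g\circ f\Rightarrow f\circ g$ for 1-endocells of a common object, satisfying the Yang–Baxter equation and $c_{\mathrm{id},f}=c_{f,\mathrm{id}}=1$. A bilax functor $\mathcal{F}:(\mathcal{K},c)\to(\mathcal{K}',c')$ with compatible Yang–Baxter operator is a lax functor ($\mathcal{F}^2_{g,f}:\mathcal{F}(g)\circ\mathcal{F}(f)\Rightarrow\mathcal{F}(gf)$, $\mathcal{F}^0_A:\mathrm{id}\Rightarrow\mathcal{F}(\mathrm{id}_A)$) and colax functor ($\mathcal{F}_{2;g,f}:\mathcal{F}(gf)\Rightarrow\mathcal{F}(g)\circ\mathcal{F}(f)$,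 $\mathcal{F}_{0;A}$) such that $\nu_{g,f}:=c'_{\mathcal{F}(g),\mathcal{F}(f)}$ is a left and right distributive law for the lax and colax structures (e.g. $\nu_{hg,f}\cdot(\mathcal{F}^2_{h,g}\circ1)=(1\circ\mathcal{F}^2_{h,g})\cdot(\nu_{h,f}\circ1)\cdot(1\circ\nu_{g,f})$, $\nu_{\mathrm{id},f}\cdot(\mathcal{F}^0\circ1)=1\circ\mathcal{F}^0$, $(\mathcal{F}_{2;h,g}\circ1)\cdot\nu_{f,hg}=(1\circ\nu_{f,g})\cdot(\nu_{f,h}\circ1)\cdot(1\circ\mathcal{F}_{2;h,g})$, $(\mathcal{F}_0\circ1)\cdot\nu_{f,\mathrm{id}}=1\circ\mathcal{F}_0$, and mirror images), satisfies $(1\circ\mathcal{F}_0)\cdot\nu_{\mathrm{id},f}\cdot(\mathcal{F}^0\circ1)=1=(\mathcal{F}_0\circ1)\cdot\nu_{f,\mathrm{id}}\cdot(1\circ\mathcal{F}^0)$, and the bilaxity conditions $(\mathcal{F}^2_{g,h}\circ\mathcal{F}^2_{f,k})\cdot(1\circ\nu_{f,h}\circ1)\cdot(\mathcal{F}_{2;g,f}\circ\mathcal{F}_{2;h,k})=\mathcal{F}_{2;gh,fk}\cdot\mathcal{F}(1\circ c_{f,h}\circ1)\cdot\mathcal{F}^2_{gf,hk}$ for $A\xrightarrow{k}B\xrightarrow{h}B\xrightarrow{f}B\xrightarrow{g}C$, $\mathcal{F}^0\circ\mathcal{F}^0=\mathcal{F}_{2;\mathrm{id},\mathrm{id}}\cdot\mathcal{F}^0$,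 $\mathcal{F}_0\circ\mathcal{F}_0=\mathcal{F}_0\cdot\mathcal{F}^2_{\mathrm{id},\mathrm{id}}$, $\mathcal{F}_0\cdot\mathcal{F}^0=1$. $B=\mathcal{F}(\mathrm{id}_A)$ is a $c'$-bimonad with $\mu=\mathcal{F}^2_{\mathrm{id},\mathrm{id}}$, $\eta=\mathcal{F}^0_A$, $\Delta=\mathcal{F}_{2;\mathrm{id},\mathrm{id}}$, $\varepsilon=\mathcal{F}_{0;A}$. For a 1-endocell $x$ of $A$, $\mathcal{F}(x)$ has left action $\rhd=\mathcal{F}^2_{\mathrm{id},x}:B\circ\mathcal{F}(x)\Rightarrow\mathcal{F}(x)$, right action $\lhd=\mathcal{F}^2_{x,\mathrm{id}}$, left coaction $\lambda=\mathcal{F}_{2;\mathrm{id},x}:\mathcal{F}(x)\Rightarrow B\circ\mathcal{F}(x)$ and right coaction $\rho=\mathcal{F}_{2;x,\mathrm{id}}$. In the monoidal category $(\mathcal{K}'(\mathcal{F}(A),\mathcal{F}(A)),\circ)$ with Yang–Baxter operator $c'$ and $c'$-bimonad $B$, a Hopf bimodule over $B$ is an object $M$ that is a $B$-bimodule ($\rhd,\lhd$, associative, unital, commuting actions) and a $B$-bicomodule ($\lambda,\rho$, coassociative, counital, commuting coactions) satisfying the four conditions $\lambda\cdot\rhd=(\mu\circ\rhd)\cdot(1\circ c'_{B,B}\circ1)\cdot(\Delta\circ\lambda)$, $\rho\cdot\lhd=(\lhd\circ\mu)\cdot(1\circ c'_{B,B}\circ1)\cdot(\rho\circ\Delta)$,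 $\lambda\cdot\lhd=(\mu\circ\lhd)\cdot(1\circ c'_{M,B}\circ1)\cdot(\lambda\circ\Delta)$, $\rho\cdot\rhd=(\rhd\circ\mu)\cdot(1\circ c'_{B,M}\circ1)\cdot(\Delta\circ\rho)$; morphisms of Hopf bimodules are 2-cells that are left and right $B$-linear and left and right $B$-colinear. *)

theory Defs
  imports Main
begin

text \<open>A (strict) 2-category, given by its objects, hom-sets of 1-cells Hom1 A B
  (1-cells A to B), hom-sets of 2-cells Hom2 f g (2-cells f to g), identities,
  composition of 1-cells (Comp1 g f = g after f), vertical composition
  (VComp b a = b after a) and horizontal composition (HComp b a = b o a).\<close>

record ('o,'a,'c) twocat =
  Ob    :: "'o set"
  Hom1  :: "'o \<Rightarrow> 'o \<Rightarrow> 'a set"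
  Hom2  :: "'a \<Rightarrow> 'a \<Rightarrow> 'c set"
  Id1   :: "'o \<Rightarrow> 'a"
  Comp1 :: "'a \<Rightarrow> 'a \<Rightarrow> 'a"
  Id2   :: "'a \<Rightarrow> 'c"
  VComp :: "'c \<Rightarrow> 'c \<Rightarrow> 'c"
  HComp :: "'c \<Rightarrow> 'c \<Rightarrow> 'c"

definition two_category :: "('o,'a,'c) twocat \<Rightarrow> bool" where
  "two_category K \<longleftrightarrow>
    (\<forall>A B. Hom1 K A B \<noteq> {} \<longrightarrow> A \<in> Ob K \<and> B \<in> Ob K) \<and>
    (\<forall>A B A' B' f. f \<in> Hom1 K A B \<longrightarrow> f \<in> Hom1 K A' B' \<longrightarrow> A = A' \<and> B = B') \<and>
    (\<forall>A \<in> Ob K. Id1 K A \<in> Hom1 K A A) \<and>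
    (\<forall>A B C f g. f \<in> Hom1 K A B \<longrightarrow> g \<in> Hom1 K B C \<longrightarrow> Comp1 K g f \<in> Hom1 K A C) \<and>
    (\<forall>A B C D f g h. f \<in> Hom1 K A B \<longrightarrow> g \<in> Hom1 K B C \<longrightarrow> h \<in> Hom1 K C D \<longrightarrow>
        Comp1 K h (Comp1 K g f) = Comp1 K (Comp1 K h g) f) \<and>
    (\<forall>A B f. f \<in> Hom1 K A B \<longrightarrow> Comp1 K f (Id1 K A) = f \<and> Comp1 K (Id1 K B) f = f) \<and>
    (\<forall>f g. Hom2 K f g \<noteq> {} \<longrightarrow> (\<exists>A B. f \<in> Hom1 K A B \<and> g \<in> Hom1 K A B)) \<and>
    (\<forall>f g f' g' \<alpha>. \<alpha> \<in> Hom2 K f g \<longrightarrow> \<alpha> \<in> Hom2 K f' g' \<longrightarrow> f = f' \<and> g = g') \<and>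
    (\<forall>A B f. f \<in> Hom1 K A B \<longrightarrow> Id2 K f \<in> Hom2 K f f) \<and>
    (\<forall>f g h \<alpha> \<beta>. \<alpha> \<in> Hom2 K f g \<longrightarrow> \<beta> \<in> Hom2 K g h \<longrightarrow> VComp K \<beta> \<alpha> \<in> Hom2 K f h) \<and>
    (\<forall>f g h k \<alpha> \<beta> \<gamma>. \<alpha> \<in> Hom2 K f g \<longrightarrow> \<beta> \<in> Hom2 K g h \<longrightarrow> \<gamma> \<in> Hom2 K h k \<longrightarrow>
        VComp K \<gamma> (VComp K \<beta> \<alpha>) = VComp K (VComp K \<gamma> \<beta>) \<alpha>) \<and>
    (\<forall>f g \<alpha>. \<alpha> \<in> Hom2 K f g \<longrightarrow> VComp K (Id2 K g) \<alpha> = \<alpha> \<and> VComp K \<alpha> (Id2 K f) = \<alpha>) \<and>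
    (\<forall>A B C f g f' g' \<alpha> \<beta>. f \<in> Hom1 K A B \<longrightarrow> f' \<in> Hom1 K B C \<longrightarrow>
        \<alpha> \<in> Hom2 K f g \<longrightarrow> \<beta> \<in> Hom2 K f' g' \<longrightarrow>
        HComp K \<beta> \<alpha> \<in> Hom2 K (Comp1 K f' f) (Comp1 K g' g)) \<and>
    (\<forall>A B C D f g f' g' f'' g'' \<alpha> \<beta> \<gamma>. f \<in> Hom1 K A B \<longrightarrow> f' \<in> Hom1 K B C \<longrightarrow>
        f'' \<in> Hom1 K C D \<longrightarrow> \<alpha> \<in> Hom2 K f g \<longrightarrow> \<beta> \<in> Hom2 K f' g' \<longrightarrow> \<gamma> \<in> Hom2 K f'' g'' \<longrightarrow>
        HComp K \<gamma> (HComp K \<beta> \<alpha>) = HComp K (HComp K \<gamma> \<beta>) \<alpha>) \<and>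
    (\<forall>A B f g \<alpha>. f \<in> Hom1 K A B \<longrightarrow> \<alpha> \<in> Hom2 K f g \<longrightarrow>
        HComp K \<alpha> (Id2 K (Id1 K A)) = \<alpha> \<and> HComp K (Id2 K (Id1 K B)) \<alpha> = \<alpha>) \<and>
    (\<forall>A B C f g. f \<in> Hom1 K A B \<longrightarrow> g \<in> Hom1 K B C \<longrightarrow>
        HComp K (Id2 K g) (Id2 K f) = Id2 K (Comp1 K g f)) \<and>
    (\<forall>A B C f g h f' g' h' \<alpha> \<alpha>' \<beta> \<beta>'. f \<in> Hom1 K A B \<longrightarrow> f' \<in> Hom1 K B C \<longrightarrow>
        \<alpha> \<in> Hom2 K f g \<longrightarrow> \<alpha>' \<in> Hom2 K g h \<longrightarrow> \<beta> \<in> Hom2 K f' g' \<longrightarrow> \<beta>' \<in> Hom2 K g' h' \<longrightarrow>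
        HComp K (VComp K \<beta>' \<beta>) (VComp K \<alpha>' \<alpha>) = VComp K (HComp K \<beta>' \<alpha>') (HComp K \<beta> \<alpha>))"

definition yb_operator :: "('o,'a,'c) twocat \<Rightarrow> ('a \<Rightarrow> 'a \<Rightarrow> 'c) \<Rightarrow> bool" where
  "yb_operator K c \<longleftrightarrow>
    (\<forall>A \<in> Ob K. \<forall>f \<in> Hom1 K A A. \<forall>g \<in> Hom1 K A A.
        c g f \<in> Hom2 K (Comp1 K g f) (Comp1 K f g)) \<and>
    (\<forall>A \<in> Ob K. \<forall>f \<in> Hom1 K A A. \<forall>f' \<in> Hom1 K A A. \<forall>g \<in> Hom1 K A A. \<forall>g' \<in> Hom1 K A A.
      \<forall>\<alpha> \<in> Hom2 K f f'. \<forall>\<beta> \<in> Hom2 K g g'.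
        VComp K (c g' f') (HComp K \<beta> \<alpha>) = VComp K (HComp K \<alpha> \<beta>) (c g f)) \<and>
    (\<forall>A \<in> Ob K. \<forall>f \<in> Hom1 K A A. \<forall>g \<in> Hom1 K A A. \<forall>h \<in> Hom1 K A A.
        VComp K (HComp K (c g f) (Id2 K h))
          (VComp K (HComp K (Id2 K g) (c h f)) (HComp K (c h g) (Id2 K f)))
      = VComp K (HComp K (Id2 K f) (c h g))
          (VComp K (HComp K (c h f) (Id2 K g)) (HComp K (Id2 K h) (c g f)))) \<and>
    (\<forall>A \<in> Ob K. \<forall>f \<in> Hom1 K A A. c (Id1 K A) f = Id2 K f \<and> c f (Id1 K A) = Id2 K f)"

definition lax_functor ::
  "('o,'a,'c) twocat \<Rightarrow> ('p,'b,'d) twocat \<Rightarrow> ('o \<Rightarrow> 'p) \<Rightarrow> ('a \<Rightarrow> 'b) \<Rightarrow> ('c \<Rightarrow> 'd)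
   \<Rightarrow> ('a \<Rightarrow> 'a \<Rightarrow> 'd) \<Rightarrow> ('o \<Rightarrow> 'd) \<Rightarrow> bool" where
  "lax_functor K K' Fo Fa Fc L2 L0 \<longleftrightarrow>
    (\<forall>A \<in> Ob K. Fo A \<in> Ob K') \<and>
    (\<forall>A B f. f \<in> Hom1 K A B \<longrightarrow> Fa f \<in> Hom1 K' (Fo A) (Fo B)) \<and>
    (\<forall>f g \<alpha>. \<alpha> \<in> Hom2 K f g \<longrightarrow> Fc \<alpha> \<in> Hom2 K' (Fa f) (Fa g)) \<and>
    (\<forall>A B f. f \<in> Hom1 K A B \<longrightarrow> Fc (Id2 K f) = Id2 K' (Fa f)) \<and>
    (\<forall>f g h \<alpha> \<beta>. \<alpha> \<in> Hom2 K f g \<longrightarrow> \<beta> \<in> Hom2 K g h \<longrightarrow>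
        Fc (VComp K \<beta> \<alpha>) = VComp K' (Fc \<beta>) (Fc \<alpha>)) \<and>
    (\<forall>A B C f g. f \<in> Hom1 K A B \<longrightarrow> g \<in> Hom1 K B C \<longrightarrow>
        L2 g f \<in> Hom2 K' (Comp1 K' (Fa g) (Fa f)) (Fa (Comp1 K g f))) \<and>
    (\<forall>A \<in> Ob K. L0 A \<in> Hom2 K' (Id1 K' (Fo A)) (Fa (Id1 K A))) \<and>
    (\<forall>A B C f f' g g' \<alpha> \<beta>. f \<in> Hom1 K A B \<longrightarrow> g \<in> Hom1 K B C \<longrightarrow>
        \<alpha> \<in> Hom2 K f f' \<longrightarrow> \<beta> \<in> Hom2 K g g' \<longrightarrow>
        VComp K' (L2 g' f') (HComp K' (Fc \<beta>) (Fc \<alpha>)) = VComp K' (Fc (HComp K \<beta> \<alpha>)) (L2 g f)) \<and>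
    (\<forall>A B C D f g h. f \<in> Hom1 K A B \<longrightarrow> g \<in> Hom1 K B C \<longrightarrow> h \<in> Hom1 K C D \<longrightarrow>
        VComp K' (L2 h (Comp1 K g f)) (HComp K' (Id2 K' (Fa h)) (L2 g f))
      = VComp K' (L2 (Comp1 K h g) f) (HComp K' (L2 h g) (Id2 K' (Fa f)))) \<and>
    (\<forall>A B f. f \<in> Hom1 K A B \<longrightarrow>
        VComp K' (L2 f (Id1 K A)) (HComp K' (Id2 K' (Fa f)) (L0 A)) = Id2 K' (Fa f) \<and>
        VComp K' (L2 (Id1 K B) f) (HComp K' (L0 B) (Id2 K' (Fa f))) = Id2 K' (Fa f))"

definition colax_functor ::
  "('o,'a,'c) twocat \<Rightarrow> ('p,'b,'d) twocat \<Rightarrow> ('o \<Rightarrow> 'p) \<Rightarrow> ('a \<Rightarrow> 'b) \<Rightarrow> ('c \<Rightarrow> 'd)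
   \<Rightarrow> ('a \<Rightarrow> 'a \<Rightarrow> 'd) \<Rightarrow> ('o \<Rightarrow> 'd) \<Rightarrow> bool" where
  "colax_functor K K' Fo Fa Fc C2 C0 \<longleftrightarrow>
    (\<forall>A \<in> Ob K. Fo A \<in> Ob K') \<and>
    (\<forall>A B f. f \<in> Hom1 K A B \<longrightarrow> Fa f \<in> Hom1 K' (Fo A) (Fo B)) \<and>
    (\<forall>f g \<alpha>. \<alpha> \<in> Hom2 K f g \<longrightarrow> Fc \<alpha> \<in> Hom2 K' (Fa f) (Fa g)) \<and>
    (\<forall>A B f. f \<in> Hom1 K A B \<longrightarrow> Fc (Id2 K f) = Id2 K' (Fa f)) \<and>
    (\<forall>f g h \<alpha> \<beta>. \<alpha> \<in> Hom2 K f g \<longrightarrow> \<beta> \<in> Hom2 K g h \<longrightarrow>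
        Fc (VComp K \<beta> \<alpha>) = VComp K' (Fc \<beta>) (Fc \<alpha>)) \<and>
    (\<forall>A B C f g. f \<in> Hom1 K A B \<longrightarrow> g \<in> Hom1 K B C \<longrightarrow>
        C2 g f \<in> Hom2 K' (Fa (Comp1 K g f)) (Comp1 K' (Fa g) (Fa f))) \<and>
    (\<forall>A \<in> Ob K. C0 A \<in> Hom2 K' (Fa (Id1 K A)) (Id1 K' (Fo A))) \<and>
    (\<forall>A B C f f' g g' \<alpha> \<beta>. f \<in> Hom1 K A B \<longrightarrow> g \<in> Hom1 K B C \<longrightarrow>
        \<alpha> \<in> Hom2 K f f' \<longrightarrow> \<beta> \<in> Hom2 K g g' \<longrightarrow>
        VComp K' (HComp K' (Fc \<beta>) (Fc \<alpha>)) (C2 g f) = VComp K' (C2 g' f') (Fc (HComp K \<beta> \<alpha>))) \<and>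
    (\<forall>A B C D f g h. f \<in> Hom1 K A B \<longrightarrow> g \<in> Hom1 K B C \<longrightarrow> h \<in> Hom1 K C D \<longrightarrow>
        VComp K' (HComp K' (Id2 K' (Fa h)) (C2 g f)) (C2 h (Comp1 K g f))
      = VComp K' (HComp K' (C2 h g) (Id2 K' (Fa f))) (C2 (Comp1 K h g) f)) \<and>
    (\<forall>A B f. f \<in> Hom1 K A B \<longrightarrow>
        VComp K' (HComp K' (Id2 K' (Fa f)) (C0 A)) (C2 f (Id1 K A)) = Id2 K' (Fa f) \<and>
        VComp K' (HComp K' (C0 B) (Id2 K' (Fa f))) (C2 (Id1 K B) f) = Id2 K' (Fa f))"

text \<open>nu g f := c' (Fa g) (Fa f), for 1-endocells g, f of a common object.\<close>

definition bilax_functor_yb ::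
  "('o,'a,'c) twocat \<Rightarrow> ('a \<Rightarrow> 'a \<Rightarrow> 'c) \<Rightarrow> ('p,'b,'d) twocat \<Rightarrow> ('b \<Rightarrow> 'b \<Rightarrow> 'd)
   \<Rightarrow> ('o \<Rightarrow> 'p) \<Rightarrow> ('a \<Rightarrow> 'b) \<Rightarrow> ('c \<Rightarrow> 'd)
   \<Rightarrow> ('a \<Rightarrow> 'a \<Rightarrow> 'd) \<Rightarrow> ('o \<Rightarrow> 'd) \<Rightarrow> ('a \<Rightarrow> 'a \<Rightarrow> 'd) \<Rightarrow> ('o \<Rightarrow> 'd) \<Rightarrow> bool" where
  "bilax_functor_yb K c K' c' Fo Fa Fc L2 L0 C2 C0 \<longleftrightarrow>
    two_category K \<and> two_category K' \<and> yb_operator K c \<and> yb_operator K' c' \<and>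
    lax_functor K K' Fo Fa Fc L2 L0 \<and> colax_functor K K' Fo Fa Fc C2 C0 \<and>
    \<comment> \<open>nu is a left and right distributive law for the lax structure\<close>
    (\<forall>A \<in> Ob K. \<forall>f \<in> Hom1 K A A. \<forall>g \<in> Hom1 K A A. \<forall>h \<in> Hom1 K A A.
        VComp K' (c' (Fa (Comp1 K h g)) (Fa f)) (HComp K' (L2 h g) (Id2 K' (Fa f)))
      = VComp K' (HComp K' (Id2 K' (Fa f)) (L2 h g))
          (VComp K' (HComp K' (c' (Fa h) (Fa f)) (Id2 K' (Fa g)))
                    (HComp K' (Id2 K' (Fa h)) (c' (Fa g) (Fa f))))) \<and>
    (\<forall>A \<in> Ob K. \<forall>f \<in> Hom1 K A A. \<forall>g \<in> Hom1 K A A. \<forall>h \<in> Hom1 K A A.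
        VComp K' (c' (Fa f) (Fa (Comp1 K h g))) (HComp K' (Id2 K' (Fa f)) (L2 h g))
      = VComp K' (HComp K' (L2 h g) (Id2 K' (Fa f)))
          (VComp K' (HComp K' (Id2 K' (Fa h)) (c' (Fa f) (Fa g)))
                    (HComp K' (c' (Fa f) (Fa h)) (Id2 K' (Fa g))))) \<and>
    (\<forall>A \<in> Ob K. \<forall>f \<in> Hom1 K A A.
        VComp K' (c' (Fa (Id1 K A)) (Fa f)) (HComp K' (L0 A) (Id2 K' (Fa f)))
          = HComp K' (Id2 K' (Fa f)) (L0 A) \<and>
        VComp K' (c' (Fa f) (Fa (Id1 K A))) (HComp K' (Id2 K' (Fa f)) (L0 A))
          = HComp K' (L0 A) (Id2 K' (Fa f))) \<and>
    \<comment> \<open>nu is a left and right distributive law for the colax structure\<close>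
    (\<forall>A \<in> Ob K. \<forall>f \<in> Hom1 K A A. \<forall>g \<in> Hom1 K A A. \<forall>h \<in> Hom1 K A A.
        VComp K' (HComp K' (C2 h g) (Id2 K' (Fa f))) (c' (Fa f) (Fa (Comp1 K h g)))
      = VComp K' (HComp K' (Id2 K' (Fa h)) (c' (Fa f) (Fa g)))
          (VComp K' (HComp K' (c' (Fa f) (Fa h)) (Id2 K' (Fa g)))
                    (HComp K' (Id2 K' (Fa f)) (C2 h g)))) \<and>
    (\<forall>A \<in> Ob K. \<forall>f \<in> Hom1 K A A. \<forall>g \<in> Hom1 K A A. \<forall>h \<in> Hom1 K A A.
        VComp K' (HComp K' (Id2 K' (Fa f)) (C2 h g)) (c' (Fa (Comp1 K h g)) (Fa f))
      = VComp K' (HComp K' (c' (Fa h) (Fa f)) (Id2 K' (Fa g)))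
          (VComp K' (HComp K' (Id2 K' (Fa h)) (c' (Fa g) (Fa f)))
                    (HComp K' (C2 h g) (Id2 K' (Fa f))))) \<and>
    (\<forall>A \<in> Ob K. \<forall>f \<in> Hom1 K A A.
        VComp K' (HComp K' (C0 A) (Id2 K' (Fa f))) (c' (Fa f) (Fa (Id1 K A)))
          = HComp K' (Id2 K' (Fa f)) (C0 A) \<and>
        VComp K' (HComp K' (Id2 K' (Fa f)) (C0 A)) (c' (Fa (Id1 K A)) (Fa f))
          = HComp K' (C0 A) (Id2 K' (Fa f))) \<and>
    \<comment> \<open>compatibility of units and counits with nu\<close>
    (\<forall>A \<in> Ob K. \<forall>f \<in> Hom1 K A A.
        VComp K' (HComp K' (Id2 K' (Fa f)) (C0 A))
          (VComp K' (c' (Fa (Id1 K A)) (Fa f)) (HComp K' (L0 A) (Id2 K' (Fa f)))) = Id2 K' (Fa f) \<and>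
        VComp K' (HComp K' (C0 A) (Id2 K' (Fa f)))
          (VComp K' (c' (Fa f) (Fa (Id1 K A))) (HComp K' (Id2 K' (Fa f)) (L0 A))) = Id2 K' (Fa f)) \<and>
    \<comment> \<open>bilaxity\<close>
    (\<forall>A B C k h f g. k \<in> Hom1 K A B \<longrightarrow> h \<in> Hom1 K B B \<longrightarrow> f \<in> Hom1 K B B \<longrightarrow> g \<in> Hom1 K B C \<longrightarrow>
        VComp K' (HComp K' (L2 g h) (L2 f k))
          (VComp K' (HComp K' (HComp K' (Id2 K' (Fa g)) (c' (Fa f) (Fa h))) (Id2 K' (Fa k)))
                    (HComp K' (C2 g f) (C2 h k)))
      = VComp K' (C2 (Comp1 K g h) (Comp1 K f k))
          (VComp K' (Fc (HComp K (HComp K (Id2 K g) (c f h)) (Id2 K k)))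
                    (L2 (Comp1 K g f) (Comp1 K h k)))) \<and>
    (\<forall>A \<in> Ob K. HComp K' (L0 A) (L0 A) = VComp K' (C2 (Id1 K A) (Id1 K A)) (L0 A)) \<and>
    (\<forall>A \<in> Ob K. HComp K' (C0 A) (C0 A) = VComp K' (C0 A) (L2 (Id1 K A) (Id1 K A))) \<and>
    (\<forall>A \<in> Ob K. VComp K' (C0 A) (L0 A) = Id2 K' (Id1 K' (Fo A)))"

text \<open>Hopf bimodule M over (B, mu, eta, Delta, eps) in the monoidal category
  (K(X,X), o) with Yang--Baxter operator c; al, ar: left/right action,
  cl, cr: left/right coaction.\<close>

definition hopf_bimodule ::
  "('p,'b,'d) twocat \<Rightarrow> ('b \<Rightarrow> 'b \<Rightarrow> 'd) \<Rightarrow> 'p \<Rightarrow> 'b \<Rightarrow> 'd \<Rightarrow> 'd \<Rightarrow> 'd \<Rightarrow> 'd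
   \<Rightarrow> 'b \<Rightarrow> 'd \<Rightarrow> 'd \<Rightarrow> 'd \<Rightarrow> 'd \<Rightarrow> bool" where
  "hopf_bimodule K c X B mu eta Del eps M al ar cl cr \<longleftrightarrow>
    M \<in> Hom1 K X X \<and>
    al \<in> Hom2 K (Comp1 K B M) M \<and> ar \<in> Hom2 K (Comp1 K M B) M \<and>
    cl \<in> Hom2 K M (Comp1 K B M) \<and> cr \<in> Hom2 K M (Comp1 K M B) \<and>
    \<comment> \<open>bimodule\<close>
    VComp K al (HComp K mu (Id2 K M)) = VComp K al (HComp K (Id2 K B) al) \<and>
    VComp K al (HComp K eta (Id2 K M)) = Id2 K M \<and>
    VComp K ar (HComp K (Id2 K M) mu) = VComp K ar (HComp K ar (Id2 K B)) \<and>
    VComp K ar (HComp K (Id2 K M) eta) = Id2 K M \<and>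
    VComp K ar (HComp K al (Id2 K B)) = VComp K al (HComp K (Id2 K B) ar) \<and>
    \<comment> \<open>bicomodule\<close>
    VComp K (HComp K Del (Id2 K M)) cl = VComp K (HComp K (Id2 K B) cl) cl \<and>
    VComp K (HComp K eps (Id2 K M)) cl = Id2 K M \<and>
    VComp K (HComp K (Id2 K M) Del) cr = VComp K (HComp K cr (Id2 K B)) cr \<and>
    VComp K (HComp K (Id2 K M) eps) cr = Id2 K M \<and>
    VComp K (HComp K cl (Id2 K B)) cr = VComp K (HComp K (Id2 K B) cr) cl \<and>
    \<comment> \<open>Hopf compatibility conditions\<close>
    VComp K cl al = VComp K (HComp K mu al)
        (VComp K (HComp K (HComp K (Id2 K B) (c B B)) (Id2 K M)) (HComp K Del cl)) \<and>
    VComp K cr ar = VComp K (HComp K ar mu)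
        (VComp K (HComp K (HComp K (Id2 K M) (c B B)) (Id2 K B)) (HComp K cr Del)) \<and>
    VComp K cl ar = VComp K (HComp K mu ar)
        (VComp K (HComp K (HComp K (Id2 K B) (c M B)) (Id2 K B)) (HComp K cl Del)) \<and>
    VComp K cr al = VComp K (HComp K al mu)
        (VComp K (HComp K (HComp K (Id2 K B) (c B M)) (Id2 K B)) (HComp K Del cr))"

definition hopf_bimodule_morphism ::
  "('p,'b,'d) twocat \<Rightarrow> 'b \<Rightarrow> 'b \<Rightarrow> 'd \<Rightarrow> 'd \<Rightarrow> 'd \<Rightarrow> 'd
   \<Rightarrow> 'b \<Rightarrow> 'd \<Rightarrow> 'd \<Rightarrow> 'd \<Rightarrow> 'd \<Rightarrow> 'd \<Rightarrow> bool" where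
  "hopf_bimodule_morphism K B M al ar cl cr N al' ar' cl' cr' \<phi> \<longleftrightarrow>
    \<phi> \<in> Hom2 K M N \<and>
    VComp K \<phi> al = VComp K al' (HComp K (Id2 K B) \<phi>) \<and>
    VComp K \<phi> ar = VComp K ar' (HComp K \<phi> (Id2 K B)) \<and>
    VComp K cl' \<phi> = VComp K (HComp K (Id2 K B) \<phi>) cl \<and>
    VComp K cr' \<phi> = VComp K (HComp K \<phi> (Id2 K B)) cr"

end

theory Submission
  imports Defs
begin

text \<open>All structure maps of \<open>\<F>(x)\<close> are components of the lax and colax structures
  at an identity 1-cell. The bimodule axioms are therefore instances of lax associativity
  and unitality, the bicomodule axioms instances of colax coassociativity and counitality,
  and the four Hopf compatibility conditions are the bilaxity condition with three of its
  four 1-cells identities, since the Yang--Baxter operator is trivial on identities.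
  Linearity and colinearity of \<open>\<F>(\<alpha>)\<close> are the naturality of \<open>\<F>\<^sup>2\<close> and
  \<open>\<F>\<^sub>2\<close> against identity 2-cells.\<close>

lemma Ob_of_Hom1: "two_category K \<Longrightarrow> f \<in> Hom1 K A B \<Longrightarrow> A \<in> Ob K \<and> B \<in> Ob K"
  unfolding two_category_def by (elim conjE) blast

lemma Id1_in_Hom1: "two_category K \<Longrightarrow> A \<in> Ob K \<Longrightarrow> Id1 K A \<in> Hom1 K A A"
  unfolding two_category_def by (elim conjE) fast

lemma Comp1_in_Hom1:
  "two_category K \<Longrightarrow> f \<in> Hom1 K A B \<Longrightarrow> g \<in> Hom1 K B C \<Longrightarrow> Comp1 K g f \<in> Hom1 K A C"
  unfolding two_category_def by (elim conjE) fast

lemma Comp1_assoc: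
  "two_category K \<Longrightarrow> f \<in> Hom1 K A B \<Longrightarrow> g \<in> Hom1 K B C \<Longrightarrow> h \<in> Hom1 K C D \<Longrightarrow>
    Comp1 K h (Comp1 K g f) = Comp1 K (Comp1 K h g) f"
  unfolding two_category_def by (elim conjE) fast

lemma Comp1_Id1_right: "two_category K \<Longrightarrow> f \<in> Hom1 K A B \<Longrightarrow> Comp1 K f (Id1 K A) = f"
  unfolding two_category_def by (elim conjE) fast

lemma Comp1_Id1_left: "two_category K \<Longrightarrow> f \<in> Hom1 K A B \<Longrightarrow> Comp1 K (Id1 K B) f = f"
  unfolding two_category_def by (elim conjE) fast

lemma Id2_in_Hom2: "two_category K \<Longrightarrow> f \<in> Hom1 K A B \<Longrightarrow> Id2 K f \<in> Hom2 K f f"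
  unfolding two_category_def by (elim conjE) fast

lemma VComp_Id2_left: "two_category K \<Longrightarrow> \<alpha> \<in> Hom2 K f g \<Longrightarrow> VComp K (Id2 K g) \<alpha> = \<alpha>"
  unfolding two_category_def by (elim conjE) fast

lemma HComp_Id2_Id1_right:
  "two_category K \<Longrightarrow> f \<in> Hom1 K A B \<Longrightarrow> \<alpha> \<in> Hom2 K f g \<Longrightarrow> HComp K \<alpha> (Id2 K (Id1 K A)) = \<alpha>"
  unfolding two_category_def by (elim conjE) fast

lemma HComp_Id2_Id1_left:
  "two_category K \<Longrightarrow> f \<in> Hom1 K A B \<Longrightarrow> \<alpha> \<in> Hom2 K f g \<Longrightarrow> HComp K (Id2 K (Id1 K B)) \<alpha> = \<alpha>"
  unfolding two_category_def by (elim conjE) fast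

lemma HComp_Id2_Id2:
  "two_category K \<Longrightarrow> f \<in> Hom1 K A B \<Longrightarrow> g \<in> Hom1 K B C \<Longrightarrow>
    HComp K (Id2 K g) (Id2 K f) = Id2 K (Comp1 K g f)"
  unfolding two_category_def by (elim conjE) fast

lemma yb_operator_Id1_left:
  "yb_operator K c \<Longrightarrow> A \<in> Ob K \<Longrightarrow> f \<in> Hom1 K A A \<Longrightarrow> c (Id1 K A) f = Id2 K f"
  unfolding yb_operator_def by (elim conjE) fast

lemma yb_operator_Id1_right:
  "yb_operator K c \<Longrightarrow> A \<in> Ob K \<Longrightarrow> f \<in> Hom1 K A A \<Longrightarrow> c f (Id1 K A) = Id2 K f"
  unfolding yb_operator_def by (elim conjE) fast

lemma lax_functor_Fa_in_Hom1:
  "lax_functor K K' Fo Fa Fc L2 L0 \<Longrightarrow> f \<in> Hom1 K A B \<Longrightarrow> Fa f \<in> Hom1 K' (Fo A) (Fo B)"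
  unfolding lax_functor_def by (elim conjE) fast

lemma lax_functor_Fc_in_Hom2:
  "lax_functor K K' Fo Fa Fc L2 L0 \<Longrightarrow> \<alpha> \<in> Hom2 K f g \<Longrightarrow> Fc \<alpha> \<in> Hom2 K' (Fa f) (Fa g)"
  unfolding lax_functor_def by (elim conjE) fast

lemma lax_functor_Fc_Id2:
  "lax_functor K K' Fo Fa Fc L2 L0 \<Longrightarrow> f \<in> Hom1 K A B \<Longrightarrow> Fc (Id2 K f) = Id2 K' (Fa f)"
  unfolding lax_functor_def by (elim conjE) fast

lemma lax_functor_L2_in_Hom2:
  "lax_functor K K' Fo Fa Fc L2 L0 \<Longrightarrow> f \<in> Hom1 K A B \<Longrightarrow> g \<in> Hom1 K B C \<Longrightarrow>
    L2 g f \<in> Hom2 K' (Comp1 K' (Fa g) (Fa f)) (Fa (Comp1 K g f))"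
  unfolding lax_functor_def by (elim conjE) fast

lemma lax_functor_L2_natural:
  "lax_functor K K' Fo Fa Fc L2 L0 \<Longrightarrow> f \<in> Hom1 K A B \<Longrightarrow> g \<in> Hom1 K B C \<Longrightarrow>
    \<alpha> \<in> Hom2 K f f' \<Longrightarrow> \<beta> \<in> Hom2 K g g' \<Longrightarrow>
    VComp K' (L2 g' f') (HComp K' (Fc \<beta>) (Fc \<alpha>)) = VComp K' (Fc (HComp K \<beta> \<alpha>)) (L2 g f)"
  unfolding lax_functor_def by (elim conjE) fast

lemma lax_functor_L2_assoc:
  "lax_functor K K' Fo Fa Fc L2 L0 \<Longrightarrow> f \<in> Hom1 K A B \<Longrightarrow> g \<in> Hom1 K B C \<Longrightarrow> h \<in> Hom1 K C D \<Longrightarrow>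
    VComp K' (L2 h (Comp1 K g f)) (HComp K' (Id2 K' (Fa h)) (L2 g f))
      = VComp K' (L2 (Comp1 K h g) f) (HComp K' (L2 h g) (Id2 K' (Fa f)))"
  unfolding lax_functor_def by (elim conjE) fast

lemma lax_functor_L0_right:
  "lax_functor K K' Fo Fa Fc L2 L0 \<Longrightarrow> f \<in> Hom1 K A B \<Longrightarrow>
    VComp K' (L2 f (Id1 K A)) (HComp K' (Id2 K' (Fa f)) (L0 A)) = Id2 K' (Fa f)"
  unfolding lax_functor_def by (elim conjE) fast

lemma lax_functor_L0_left:
  "lax_functor K K' Fo Fa Fc L2 L0 \<Longrightarrow> f \<in> Hom1 K A B \<Longrightarrow>
    VComp K' (L2 (Id1 K B) f) (HComp K' (L0 B) (Id2 K' (Fa f))) = Id2 K' (Fa f)"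
  unfolding lax_functor_def by (elim conjE) fast

lemma colax_functor_Fa_in_Hom1:
  "colax_functor K K' Fo Fa Fc C2 C0 \<Longrightarrow> f \<in> Hom1 K A B \<Longrightarrow> Fa f \<in> Hom1 K' (Fo A) (Fo B)"
  unfolding colax_functor_def by (elim conjE) fast

lemma colax_functor_Fc_Id2:
  "colax_functor K K' Fo Fa Fc C2 C0 \<Longrightarrow> f \<in> Hom1 K A B \<Longrightarrow> Fc (Id2 K f) = Id2 K' (Fa f)"
  unfolding colax_functor_def by (elim conjE) fast

lemma colax_functor_C2_in_Hom2:
  "colax_functor K K' Fo Fa Fc C2 C0 \<Longrightarrow> f \<in> Hom1 K A B \<Longrightarrow> g \<in> Hom1 K B C \<Longrightarrow>
    C2 g f \<in> Hom2 K' (Fa (Comp1 K g f)) (Comp1 K' (Fa g) (Fa f))"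
  unfolding colax_functor_def by (elim conjE) fast

lemma colax_functor_C2_natural:
  "colax_functor K K' Fo Fa Fc C2 C0 \<Longrightarrow> f \<in> Hom1 K A B \<Longrightarrow> g \<in> Hom1 K B C \<Longrightarrow>
    \<alpha> \<in> Hom2 K f f' \<Longrightarrow> \<beta> \<in> Hom2 K g g' \<Longrightarrow>
    VComp K' (HComp K' (Fc \<beta>) (Fc \<alpha>)) (C2 g f) = VComp K' (C2 g' f') (Fc (HComp K \<beta> \<alpha>))"
  unfolding colax_functor_def by (elim conjE) fast

lemma colax_functor_C2_coassoc:
  "colax_functor K K' Fo Fa Fc C2 C0 \<Longrightarrow> f \<in> Hom1 K A B \<Longrightarrow> g \<in> Hom1 K B C \<Longrightarrow> h \<in> Hom1 K C D \<Longrightarrow>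
    VComp K' (HComp K' (Id2 K' (Fa h)) (C2 g f)) (C2 h (Comp1 K g f))
      = VComp K' (HComp K' (C2 h g) (Id2 K' (Fa f))) (C2 (Comp1 K h g) f)"
  unfolding colax_functor_def by (elim conjE) fast

lemma colax_functor_C0_right:
  "colax_functor K K' Fo Fa Fc C2 C0 \<Longrightarrow> f \<in> Hom1 K A B \<Longrightarrow>
    VComp K' (HComp K' (Id2 K' (Fa f)) (C0 A)) (C2 f (Id1 K A)) = Id2 K' (Fa f)"
  unfolding colax_functor_def by (elim conjE) fast

lemma colax_functor_C0_left:
  "colax_functor K K' Fo Fa Fc C2 C0 \<Longrightarrow> f \<in> Hom1 K A B \<Longrightarrow>
    VComp K' (HComp K' (C0 B) (Id2 K' (Fa f))) (C2 (Id1 K B) f) = Id2 K' (Fa f)"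
  unfolding colax_functor_def by (elim conjE) fast

lemma bilax_functor_ybD:
  assumes "bilax_functor_yb K c K' c' Fo Fa Fc L2 L0 C2 C0"
  shows "two_category K" "two_category K'" "yb_operator K c"
    "lax_functor K K' Fo Fa Fc L2 L0" "colax_functor K K' Fo Fa Fc C2 C0"
  using assms unfolding bilax_functor_yb_def by blast+

lemma bilax_functor_yb_bilaxity:
  assumes "bilax_functor_yb K c K' c' Fo Fa Fc L2 L0 C2 C0"
    and "k \<in> Hom1 K A B" "h \<in> Hom1 K B B" "f \<in> Hom1 K B B" "g \<in> Hom1 K B C"
  shows "VComp K' (HComp K' (L2 g h) (L2 f k))
          (VComp K' (HComp K' (HComp K' (Id2 K' (Fa g)) (c' (Fa f) (Fa h))) (Id2 K' (Fa k)))
                    (HComp K' (C2 g f) (C2 h k)))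
      = VComp K' (C2 (Comp1 K g h) (Comp1 K f k))
          (VComp K' (Fc (HComp K (HComp K (Id2 K g) (c f h)) (Id2 K k)))
                    (L2 (Comp1 K g f) (Comp1 K h k)))"
proof -
  from assms(1) have "\<forall>A B C k h f g. k \<in> Hom1 K A B \<longrightarrow> h \<in> Hom1 K B B \<longrightarrow> f \<in> Hom1 K B B \<longrightarrow>
      g \<in> Hom1 K B C \<longrightarrow>
        VComp K' (HComp K' (L2 g h) (L2 f k))
          (VComp K' (HComp K' (HComp K' (Id2 K' (Fa g)) (c' (Fa f) (Fa h))) (Id2 K' (Fa k)))
                    (HComp K' (C2 g f) (C2 h k)))
      = VComp K' (C2 (Comp1 K g h) (Comp1 K f k))
          (VComp K' (Fc (HComp K (HComp K (Id2 K g) (c f h)) (Id2 K k)))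
                    (L2 (Comp1 K g f) (Comp1 K h k)))"
    unfolding bilax_functor_yb_def by (elim conjE) assumption
  with assms(2-) show ?thesis by blast
qed

definition bimodule ::
  "('p,'b,'d) twocat \<Rightarrow> 'p \<Rightarrow> 'b \<Rightarrow> 'd \<Rightarrow> 'd \<Rightarrow> 'b \<Rightarrow> 'd \<Rightarrow> 'd \<Rightarrow> bool" where
  "bimodule K X B mu eta M al ar \<longleftrightarrow>
    M \<in> Hom1 K X X \<and> al \<in> Hom2 K (Comp1 K B M) M \<and> ar \<in> Hom2 K (Comp1 K M B) M \<and>
    VComp K al (HComp K mu (Id2 K M)) = VComp K al (HComp K (Id2 K B) al) \<and>
    VComp K al (HComp K eta (Id2 K M)) = Id2 K M \<and>
    VComp K ar (HComp K (Id2 K M) mu) = VComp K ar (HComp K ar (Id2 K B)) \<and>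
    VComp K ar (HComp K (Id2 K M) eta) = Id2 K M \<and>
    VComp K ar (HComp K al (Id2 K B)) = VComp K al (HComp K (Id2 K B) ar)"

definition bicomodule ::
  "('p,'b,'d) twocat \<Rightarrow> 'p \<Rightarrow> 'b \<Rightarrow> 'd \<Rightarrow> 'd \<Rightarrow> 'b \<Rightarrow> 'd \<Rightarrow> 'd \<Rightarrow> bool" where
  "bicomodule K X B Del eps M cl cr \<longleftrightarrow>
    M \<in> Hom1 K X X \<and> cl \<in> Hom2 K M (Comp1 K B M) \<and> cr \<in> Hom2 K M (Comp1 K M B) \<and>
    VComp K (HComp K Del (Id2 K M)) cl = VComp K (HComp K (Id2 K B) cl) cl \<and>
    VComp K (HComp K eps (Id2 K M)) cl = Id2 K M \<and>
    VComp K (HComp K (Id2 K M) Del) cr = VComp K (HComp K cr (Id2 K B)) cr \<and>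
    VComp K (HComp K (Id2 K M) eps) cr = Id2 K M \<and>
    VComp K (HComp K cl (Id2 K B)) cr = VComp K (HComp K (Id2 K B) cr) cl"

definition hopf_compatible ::
  "('p,'b,'d) twocat \<Rightarrow> ('b \<Rightarrow> 'b \<Rightarrow> 'd) \<Rightarrow> 'b \<Rightarrow> 'd \<Rightarrow> 'd
   \<Rightarrow> 'b \<Rightarrow> 'd \<Rightarrow> 'd \<Rightarrow> 'd \<Rightarrow> 'd \<Rightarrow> bool" where
  "hopf_compatible K c B mu Del M al ar cl cr \<longleftrightarrow>
    VComp K cl al = VComp K (HComp K mu al)
        (VComp K (HComp K (HComp K (Id2 K B) (c B B)) (Id2 K M)) (HComp K Del cl)) \<and>
    VComp K cr ar = VComp K (HComp K ar mu)
        (VComp K (HComp K (HComp K (Id2 K M) (c B B)) (Id2 K B)) (HComp K cr Del)) \<and>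
    VComp K cl ar = VComp K (HComp K mu ar)
        (VComp K (HComp K (HComp K (Id2 K B) (c M B)) (Id2 K B)) (HComp K cl Del)) \<and>
    VComp K cr al = VComp K (HComp K al mu)
        (VComp K (HComp K (HComp K (Id2 K B) (c B M)) (Id2 K B)) (HComp K Del cr))"

lemma hopf_bimoduleI:
  "bimodule K X B mu eta M al ar \<Longrightarrow> bicomodule K X B Del eps M cl cr \<Longrightarrow>
    hopf_compatible K c B mu Del M al ar cl cr \<Longrightarrow>
    hopf_bimodule K c X B mu eta Del eps M al ar cl cr"
  unfolding bimodule_def bicomodule_def hopf_compatible_def hopf_bimodule_def by blast

lemma lax_functor_bimodule:
  assumes K: "two_category K" and F: "lax_functor K K' Fo Fa Fc L2 L0"
    and x: "x \<in> Hom1 K A A"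
  shows "bimodule K' (Fo A) (Fa (Id1 K A)) (L2 (Id1 K A) (Id1 K A)) (L0 A)
           (Fa x) (L2 (Id1 K A) x) (L2 x (Id1 K A))"
proof -
  have I: "Id1 K A \<in> Hom1 K A A"
    using Id1_in_Hom1[OF K] Ob_of_Hom1[OF K x] by blast
  have Ix: "Comp1 K (Id1 K A) x = x" and xI: "Comp1 K x (Id1 K A) = x"
    and II: "Comp1 K (Id1 K A) (Id1 K A) = Id1 K A"
    using Comp1_Id1_left[OF K x] Comp1_Id1_right[OF K x] Comp1_Id1_left[OF K I] by auto
  show ?thesis
    unfolding bimodule_def
    using lax_functor_Fa_in_Hom1[OF F x]
      lax_functor_L2_in_Hom2[OF F x I] lax_functor_L2_in_Hom2[OF F I x]
      lax_functor_L2_assoc[OF F x I I] lax_functor_L2_assoc[OF F I I x]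
      lax_functor_L2_assoc[OF F I x I]
      lax_functor_L0_left[OF F x] lax_functor_L0_right[OF F x]
    by (simp add: Ix xI II)
qed

lemma colax_functor_bicomodule:
  assumes K: "two_category K" and F: "colax_functor K K' Fo Fa Fc C2 C0"
    and x: "x \<in> Hom1 K A A"
  shows "bicomodule K' (Fo A) (Fa (Id1 K A)) (C2 (Id1 K A) (Id1 K A)) (C0 A)
           (Fa x) (C2 (Id1 K A) x) (C2 x (Id1 K A))"
proof -
  have I: "Id1 K A \<in> Hom1 K A A"
    using Id1_in_Hom1[OF K] Ob_of_Hom1[OF K x] by blast
  have Ix: "Comp1 K (Id1 K A) x = x" and xI: "Comp1 K x (Id1 K A) = x"
    and II: "Comp1 K (Id1 K A) (Id1 K A) = Id1 K A"
    using Comp1_Id1_left[OF K x] Comp1_Id1_right[OF K x] Comp1_Id1_left[OF K I] by auto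
  show ?thesis
    unfolding bicomodule_def
    using colax_functor_Fa_in_Hom1[OF F x]
      colax_functor_C2_in_Hom2[OF F x I] colax_functor_C2_in_Hom2[OF F I x]
      colax_functor_C2_coassoc[OF F x I I] colax_functor_C2_coassoc[OF F I I x]
      colax_functor_C2_coassoc[OF F I x I]
      colax_functor_C0_left[OF F x] colax_functor_C0_right[OF F x]
    by (simp add: Ix xI II)
qed

lemma bilax_functor_yb_bilaxity_Id1_inner_right:
  assumes F: "bilax_functor_yb K c K' c' Fo Fa Fc L2 L0 C2 C0"
    and k: "k \<in> Hom1 K A B" and f: "f \<in> Hom1 K B B" and g: "g \<in> Hom1 K B C"
  shows "VComp K' (HComp K' (L2 g (Id1 K B)) (L2 f k))
          (VComp K' (HComp K' (HComp K' (Id2 K' (Fa g)) (c' (Fa f) (Fa (Id1 K B)))) (Id2 K' (Fa k)))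
                    (HComp K' (C2 g f) (C2 (Id1 K B) k)))
      = VComp K' (C2 g (Comp1 K f k)) (L2 (Comp1 K g f) k)"
proof -
  note K = bilax_functor_ybD(1)[OF F] and K' = bilax_functor_ybD(2)[OF F]
    and L = bilax_functor_ybD(4)[OF F]
  have B: "B \<in> Ob K" using Ob_of_Hom1[OF K f] by blast
  have I: "Id1 K B \<in> Hom1 K B B" using Id1_in_Hom1[OF K B] .
  have gf: "Comp1 K g f \<in> Hom1 K B C" using Comp1_in_Hom1[OF K f g] .
  have "Fc (HComp K (HComp K (Id2 K g) (c f (Id1 K B))) (Id2 K k))
      = Id2 K' (Fa (Comp1 K (Comp1 K g f) k))"
    using yb_operator_Id1_right[OF bilax_functor_ybD(3)[OF F] B f]
      HComp_Id2_Id2[OF K f g] HComp_Id2_Id2[OF K k gf]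
      lax_functor_Fc_Id2[OF L Comp1_in_Hom1[OF K k gf]]
    by simp
  then show ?thesis
    using bilax_functor_yb_bilaxity[OF F k I f g]
      VComp_Id2_left[OF K' lax_functor_L2_in_Hom2[OF L k gf]]
    by (simp add: Comp1_Id1_right[OF K g] Comp1_Id1_left[OF K k])
qed

lemma bilax_functor_yb_bilaxity_Id1_inner_left:
  assumes F: "bilax_functor_yb K c K' c' Fo Fa Fc L2 L0 C2 C0"
    and k: "k \<in> Hom1 K A B" and h: "h \<in> Hom1 K B B" and g: "g \<in> Hom1 K B C"
  shows "VComp K' (HComp K' (L2 g h) (L2 (Id1 K B) k))
          (VComp K' (HComp K' (HComp K' (Id2 K' (Fa g)) (c' (Fa (Id1 K B)) (Fa h))) (Id2 K' (Fa k)))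
                    (HComp K' (C2 g (Id1 K B)) (C2 h k)))
      = VComp K' (C2 (Comp1 K g h) k) (L2 g (Comp1 K h k))"
proof -
  note K = bilax_functor_ybD(1)[OF F] and K' = bilax_functor_ybD(2)[OF F]
    and L = bilax_functor_ybD(4)[OF F]
  have B: "B \<in> Ob K" using Ob_of_Hom1[OF K h] by blast
  have I: "Id1 K B \<in> Hom1 K B B" using Id1_in_Hom1[OF K B] .
  have gh: "Comp1 K g h \<in> Hom1 K B C" and hk: "Comp1 K h k \<in> Hom1 K A B"
    using Comp1_in_Hom1[OF K h g] Comp1_in_Hom1[OF K k h] .
  have "Fc (HComp K (HComp K (Id2 K g) (c (Id1 K B) h)) (Id2 K k))
      = Id2 K' (Fa (Comp1 K g (Comp1 K h k)))"
    using yb_operator_Id1_left[OF bilax_functor_ybD(3)[OF F] B h]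
      HComp_Id2_Id2[OF K h g] HComp_Id2_Id2[OF K k gh] Comp1_assoc[OF K k h g]
      lax_functor_Fc_Id2[OF L Comp1_in_Hom1[OF K k gh]]
    by simp
  then show ?thesis
    using bilax_functor_yb_bilaxity[OF F k h I g]
      VComp_Id2_left[OF K' lax_functor_L2_in_Hom2[OF L hk g]]
    by (simp add: Comp1_Id1_right[OF K g] Comp1_Id1_left[OF K k])
qed

lemma bilax_functor_yb_hopf_compatible:
  assumes F: "bilax_functor_yb K c K' c' Fo Fa Fc L2 L0 C2 C0" and x: "x \<in> Hom1 K A A"
  shows "hopf_compatible K' c' (Fa (Id1 K A)) (L2 (Id1 K A) (Id1 K A)) (C2 (Id1 K A) (Id1 K A))
           (Fa x) (L2 (Id1 K A) x) (L2 x (Id1 K A)) (C2 (Id1 K A) x) (C2 x (Id1 K A))"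
proof -
  note K = bilax_functor_ybD(1)[OF F]
  have I: "Id1 K A \<in> Hom1 K A A"
    using Id1_in_Hom1[OF K] Ob_of_Hom1[OF K x] by blast
  have Ix: "Comp1 K (Id1 K A) x = x" and xI: "Comp1 K x (Id1 K A) = x"
    and II: "Comp1 K (Id1 K A) (Id1 K A) = Id1 K A"
    using Comp1_Id1_left[OF K x] Comp1_Id1_right[OF K x] Comp1_Id1_left[OF K I] by auto
  show ?thesis
    unfolding hopf_compatible_def
    using bilax_functor_yb_bilaxity_Id1_inner_right[OF F x I I]
      bilax_functor_yb_bilaxity_Id1_inner_right[OF F I I x]
      bilax_functor_yb_bilaxity_Id1_inner_right[OF F I x I]
      bilax_functor_yb_bilaxity_Id1_inner_left[OF F I x I]
    by (simp add: Ix xI II)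
qed

lemma lax_functor_Fc_linear:
  assumes K: "two_category K" and F: "lax_functor K K' Fo Fa Fc L2 L0"
    and x: "x \<in> Hom1 K A B" and \<alpha>: "\<alpha> \<in> Hom2 K x y"
  shows "VComp K' (Fc \<alpha>) (L2 (Id1 K B) x)
           = VComp K' (L2 (Id1 K B) y) (HComp K' (Id2 K' (Fa (Id1 K B))) (Fc \<alpha>))"
    and "VComp K' (Fc \<alpha>) (L2 x (Id1 K A))
           = VComp K' (L2 y (Id1 K A)) (HComp K' (Fc \<alpha>) (Id2 K' (Fa (Id1 K A))))"
proof -
  have IA: "Id1 K A \<in> Hom1 K A A" and IB: "Id1 K B \<in> Hom1 K B B"
    using Id1_in_Hom1[OF K] Ob_of_Hom1[OF K x] by blast+
  show "VComp K' (Fc \<alpha>) (L2 (Id1 K B) x)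
          = VComp K' (L2 (Id1 K B) y) (HComp K' (Id2 K' (Fa (Id1 K B))) (Fc \<alpha>))"
    using lax_functor_L2_natural[OF F x IB \<alpha> Id2_in_Hom2[OF K IB]]
    by (simp add: lax_functor_Fc_Id2[OF F IB] HComp_Id2_Id1_left[OF K x \<alpha>])
  show "VComp K' (Fc \<alpha>) (L2 x (Id1 K A))
          = VComp K' (L2 y (Id1 K A)) (HComp K' (Fc \<alpha>) (Id2 K' (Fa (Id1 K A))))"
    using lax_functor_L2_natural[OF F IA x Id2_in_Hom2[OF K IA] \<alpha>]
    by (simp add: lax_functor_Fc_Id2[OF F IA] HComp_Id2_Id1_right[OF K x \<alpha>])
qed

lemma colax_functor_Fc_colinear:
  assumes K: "two_category K" and F: "colax_functor K K' Fo Fa Fc C2 C0"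
    and x: "x \<in> Hom1 K A B" and \<alpha>: "\<alpha> \<in> Hom2 K x y"
  shows "VComp K' (C2 (Id1 K B) y) (Fc \<alpha>)
           = VComp K' (HComp K' (Id2 K' (Fa (Id1 K B))) (Fc \<alpha>)) (C2 (Id1 K B) x)"
    and "VComp K' (C2 y (Id1 K A)) (Fc \<alpha>)
           = VComp K' (HComp K' (Fc \<alpha>) (Id2 K' (Fa (Id1 K A)))) (C2 x (Id1 K A))"
proof -
  have IA: "Id1 K A \<in> Hom1 K A A" and IB: "Id1 K B \<in> Hom1 K B B"
    using Id1_in_Hom1[OF K] Ob_of_Hom1[OF K x] by blast+
  show "VComp K' (C2 (Id1 K B) y) (Fc \<alpha>)
          = VComp K' (HComp K' (Id2 K' (Fa (Id1 K B))) (Fc \<alpha>)) (C2 (Id1 K B) x)"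
    using colax_functor_C2_natural[OF F x IB \<alpha> Id2_in_Hom2[OF K IB]]
    by (simp add: colax_functor_Fc_Id2[OF F IB] HComp_Id2_Id1_left[OF K x \<alpha>])
  show "VComp K' (C2 y (Id1 K A)) (Fc \<alpha>)
          = VComp K' (HComp K' (Fc \<alpha>) (Id2 K' (Fa (Id1 K A)))) (C2 x (Id1 K A))"
    using colax_functor_C2_natural[OF F IA x Id2_in_Hom2[OF K IA] \<alpha>]
    by (simp add: colax_functor_Fc_Id2[OF F IA] HComp_Id2_Id1_right[OF K x \<alpha>])
qed

theorem corollary4p19:
  fixes K :: "('o,'a,'c) twocat" and c :: "'a \<Rightarrow> 'a \<Rightarrow> 'c"
    and K' :: "('p,'b,'d) twocat" and c' :: "'b \<Rightarrow> 'b \<Rightarrow> 'd"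
    and Fo :: "'o \<Rightarrow> 'p" and Fa :: "'a \<Rightarrow> 'b" and Fc :: "'c \<Rightarrow> 'd"
    and L2 :: "'a \<Rightarrow> 'a \<Rightarrow> 'd" and L0 :: "'o \<Rightarrow> 'd"
    and C2 :: "'a \<Rightarrow> 'a \<Rightarrow> 'd" and C0 :: "'o \<Rightarrow> 'd"
    and A :: 'o
  assumes "bilax_functor_yb K c K' c' Fo Fa Fc L2 L0 C2 C0"
    and "A \<in> Ob K"
  shows "(\<forall>x \<in> Hom1 K A A.
            hopf_bimodule K' c' (Fo A) (Fa (Id1 K A))
              (L2 (Id1 K A) (Id1 K A)) (L0 A) (C2 (Id1 K A) (Id1 K A)) (C0 A)
              (Fa x) (L2 (Id1 K A) x) (L2 x (Id1 K A)) (C2 (Id1 K A) x) (C2 x (Id1 K A)))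
       \<and> (\<forall>x \<in> Hom1 K A A. \<forall>y \<in> Hom1 K A A. \<forall>\<alpha> \<in> Hom2 K x y.
            hopf_bimodule_morphism K' (Fa (Id1 K A))
              (Fa x) (L2 (Id1 K A) x) (L2 x (Id1 K A)) (C2 (Id1 K A) x) (C2 x (Id1 K A))
              (Fa y) (L2 (Id1 K A) y) (L2 y (Id1 K A)) (C2 (Id1 K A) y) (C2 y (Id1 K A))
              (Fc \<alpha>))"
proof -
  note K = bilax_functor_ybD(1)[OF assms(1)]
    and L = bilax_functor_ybD(4)[OF assms(1)] and C = bilax_functor_ybD(5)[OF assms(1)]
  have "hopf_bimodule K' c' (Fo A) (Fa (Id1 K A))
          (L2 (Id1 K A) (Id1 K A)) (L0 A) (C2 (Id1 K A) (Id1 K A)) (C0 A)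
          (Fa x) (L2 (Id1 K A) x) (L2 x (Id1 K A)) (C2 (Id1 K A) x) (C2 x (Id1 K A))"
    if x: "x \<in> Hom1 K A A" for x
    using lax_functor_bimodule[OF K L x] colax_functor_bicomodule[OF K C x]
      bilax_functor_yb_hopf_compatible[OF assms(1) x]
    by (rule hopf_bimoduleI)
  moreover have "hopf_bimodule_morphism K' (Fa (Id1 K A))
          (Fa x) (L2 (Id1 K A) x) (L2 x (Id1 K A)) (C2 (Id1 K A) x) (C2 x (Id1 K A))
          (Fa y) (L2 (Id1 K A) y) (L2 y (Id1 K A)) (C2 (Id1 K A) y) (C2 y (Id1 K A))
          (Fc \<alpha>)"
    if x: "x \<in> Hom1 K A A" and \<alpha>: "\<alpha> \<in> Hom2 K x y" for x y \<alpha>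
    unfolding hopf_bimodule_morphism_def
    using lax_functor_Fc_in_Hom2[OF L \<alpha>]
      lax_functor_Fc_linear[OF K L x \<alpha>] colax_functor_Fc_colinear[OF K C x \<alpha>]
    by blast
  ultimately show ?thesis by blast
qed

end
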